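(* Let $G$ be a finite nilpotent group whose order is divisible by at least two distinct primes. Then the cyclic graph $\Delta(G)$ is connected and $\mathrm{diam}(\Delta(G))\le 3$.
   Context: For a finite group $G$, the cyclic graph $\Delta(G)$ has vertex set $G^{\#}=G\setminus\{1\}$, and distinct vertices $x,y$ are adjacent if and only if the subgroup $\langle x,y\rangle$ is cyclic. The diameter is the maximum graph distance between two vertices. *)

theory Defs
  imports "HOL-Algebra.Algebra" "HOL-Library.Extended_Nat" "HOL-Computational_Algebra.Primes"
begin

definition commutator_set :: "('a, 'b) monoid_scheme \<Rightarrow> 'a set \<Rightarrow> 'a set \<Rightarrow> 'a set" where
  "commutator_set G H K =
     {h \<otimes>\<^bsub>G\<^esub> k \<otimes>\<^bsub>G\<^esub> inv\<^bsub>G\<^esub> h \<otimes>\<^bsub>G\<^esub> inv\<^bsub>G\<^esub> k | h k. h \<in> H \<and> k \<in> K}"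

fun lower_central :: "('a, 'b) monoid_scheme \<Rightarrow> nat \<Rightarrow> 'a set" where
  "lower_central G 0 = carrier G"
| "lower_central G (Suc n) = generate G (commutator_set G (carrier G) (lower_central G n))"

definition nilpotent_group :: "('a, 'b) monoid_scheme \<Rightarrow> bool" where
  "nilpotent_group G \<longleftrightarrow> group G \<and> (\<exists>n. lower_central G n = {\<one>\<^bsub>G\<^esub>})"

definition cyc_vertices :: "('a, 'b) monoid_scheme \<Rightarrow> 'a set" where
  "cyc_vertices G = carrier G - {\<one>\<^bsub>G\<^esub>}"

definition cyc_adj :: "('a, 'b) monoid_scheme \<Rightarrow> 'a \<Rightarrow> 'a \<Rightarrow> bool" where
  "cyc_adj G x y \<longleftrightarrow> x \<in> cyc_vertices G \<and> y \<in> cyc_vertices G \<and> x \<noteq> y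
      \<and> cyclic_group (subgroup_generated G {x, y})"

definition cyc_walk :: "('a, 'b) monoid_scheme \<Rightarrow> 'a list \<Rightarrow> bool" where
  "cyc_walk G xs \<longleftrightarrow> xs \<noteq> [] \<and> set xs \<subseteq> cyc_vertices G
      \<and> (\<forall>i. Suc i < length xs \<longrightarrow> cyc_adj G (xs ! i) (xs ! Suc i))"

(* graph distance (infinity if no path) *)
definition cyc_dist :: "('a, 'b) monoid_scheme \<Rightarrow> 'a \<Rightarrow> 'a \<Rightarrow> enat" where
  "cyc_dist G x y = Inf {enat (length xs - 1) | xs. cyc_walk G xs \<and> hd xs = x \<and> last xs = y}"

definition cyc_connected :: "('a, 'b) monoid_scheme \<Rightarrow> bool" where
  "cyc_connected G \<longleftrightarrow> (\<forall>x\<in>cyc_vertices G. \<forall>y\<in>cyc_vertices G.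
      \<exists>xs. cyc_walk G xs \<and> hd xs = x \<and> last xs = y)"

definition cyc_diam :: "('a, 'b) monoid_scheme \<Rightarrow> enat" where
  "cyc_diam G = Sup {cyc_dist G x y | x y. x \<in> cyc_vertices G \<and> y \<in> cyc_vertices G}"

end

theory Submission
  imports Defs
begin

(*
  In a nilpotent group, elements a, b of coprime orders commute. Indeed, if the commutator
  [a,b] lies in the k-th term of the lower central series, it is central modulo the next term,
  so [a,b^j] = [a,b]^j modulo that term. Taking j = ord b, and symmetrically for a, both
  [a,b]^(ord b) and [a,b]^(ord a) lie in the next term, hence so does [a,b] itself. By induction
  [a,b] lies in every term of the series, the last of which is trivial.
  Commuting elements of coprime orders generate the cyclic group <ab>, and x generates a cyclic
  group together with any of its powers.

  Now let x, z be nontrivial. If primes r and s with r <> s divide ord x and ord z, the powers x'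
  of x of order r and z' of z of order s give the path x - x' - z' - z. Otherwise ord x and ord z
  are powers of one prime r; an element of prime order s <> r, which exists by Cauchy's theorem
  because |G| has a second prime divisor s, is adjacent to both x and z.
*)

context group
begin

lemma mult_inv_cancel_left [simp]:
  "x \<in> carrier G \<Longrightarrow> y \<in> carrier G \<Longrightarrow> x \<otimes> (inv x \<otimes> y) = y"
  by (simp flip: m_assoc)

lemma inv_mult_cancel_left [simp]:
  "x \<in> carrier G \<Longrightarrow> y \<in> carrier G \<Longrightarrow> inv x \<otimes> (x \<otimes> y) = y"
  by (simp flip: m_assoc)

definition commutator :: "'a \<Rightarrow> 'a \<Rightarrow> 'a" where
  "commutator x y = x \<otimes> y \<otimes> inv x \<otimes> inv y"

lemma commutator_closed [simp]:
  "x \<in> carrier G \<Longrightarrow> y \<in> carrier G \<Longrightarrow> commutator x y \<in> carrier G"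
  by (simp add: commutator_def)

lemma commutator_swap:
  "x \<in> carrier G \<Longrightarrow> y \<in> carrier G \<Longrightarrow> commutator y x = inv (commutator x y)"
  by (simp add: commutator_def inv_mult_group m_assoc)

lemma lower_central_subset_carrier: "lower_central G n \<subseteq> carrier G"
proof (induction n)
  case (Suc n)
  then have "commutator_set G (carrier G) (lower_central G n) \<subseteq> carrier G"
    by (auto simp: commutator_set_def)
  then show ?case by (simp add: generate_incl)
qed simp

lemma subgroup_lower_central: "subgroup (lower_central G n) G"
proof (cases n)
  case (Suc k)
  have "commutator_set G (carrier G) (lower_central G k) \<subseteq> carrier G"
    using lower_central_subset_carrier[of k] by (auto simp: commutator_set_def)
  then show ?thesis using Suc by (simp add: generate_is_subgroup)
qed (simp add: subgroup_self)

lemma commutator_mem_lower_central_Suc: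
  "g \<in> carrier G \<Longrightarrow> h \<in> lower_central G n \<Longrightarrow> commutator g h \<in> lower_central G (Suc n)"
  by (auto simp: commutator_def commutator_set_def intro!: generate.incl)

lemma lower_central_Suc_subset: "lower_central G (Suc n) \<subseteq> lower_central G n"
proof (induction n)
  case 0
  show ?case using lower_central_subset_carrier[of 1] by simp
next
  case (Suc n)
  then have "commutator_set G (carrier G) (lower_central G (Suc n))
      \<subseteq> commutator_set G (carrier G) (lower_central G n)"
    unfolding commutator_set_def by blast
  then show ?case by (simp only: lower_central.simps) (rule mono_generate)
qed

lemma lower_central_conj_closed:
  assumes g: "g \<in> carrier G" and x: "x \<in> lower_central G n"
  shows "g \<otimes> x \<otimes> inv g \<in> lower_central G n"
proof -
  have "x \<in> carrier G" using x lower_central_subset_carrier by blast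
  then have "g \<otimes> x \<otimes> inv g = commutator g x \<otimes> x"
    using g by (simp add: commutator_def m_assoc)
  moreover have "commutator g x \<in> lower_central G n"
    using commutator_mem_lower_central_Suc[OF g x] lower_central_Suc_subset by blast
  ultimately show ?thesis
    using x subgroup.m_closed[OF subgroup_lower_central] by metis
qed

lemma nat_pow_mem_subgroup:
  assumes "subgroup H G" "x \<in> H" shows "x [^] (n::nat) \<in> H"
  using assms by (induction n) (auto simp: subgroup.one_closed subgroup.m_closed)

lemma mem_subgroup_of_coprime_pows:
  assumes H: "subgroup H G" and c: "c \<in> carrier G"
    and m: "c [^] m \<in> H" and n: "c [^] n \<in> H" and cop: "coprime m (n::nat)"
  shows "c \<in> H"
proof (cases "m = 0")
  case True
  then show ?thesis using n c cop by simp
next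
  case False
  then obtain u v where "m * u = n * v + 1"
    using bezout_nat[of m n] cop by auto
  then have "c [^] (m * u) = c [^] (n * v) \<otimes> c"
    using c by (simp add: nat_pow_mult[symmetric])
  then have "c = inv (c [^] (n * v)) \<otimes> c [^] (m * u)"
    using c by (simp add: m_assoc[symmetric])
  moreover have "c [^] (m * u) \<in> H" "c [^] (n * v) \<in> H"
    using nat_pow_mem_subgroup[OF H m] nat_pow_mem_subgroup[OF H n] c by (auto simp: nat_pow_pow)
  ultimately show ?thesis
    using H by (metis subgroup.m_closed subgroup.m_inv_closed)
qed

lemma commutator_pow_right_mod_lower_central:
  assumes a: "a \<in> carrier G" and b: "b \<in> carrier G"
    and ab: "commutator a b \<in> lower_central G k"
  shows "commutator a (b [^] (j::nat)) \<otimes> inv (commutator a b [^] j) \<in> lower_central G (Suc k)"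
proof (induction j)
  case 0
  show ?case using a by (simp add: commutator_def generate.one)
next
  case (Suc j)
  define B c C where "B = b [^] j" and "c = commutator a b" and "C = c [^] j"
  have carrier: "B \<in> carrier G" "c \<in> carrier G" "C \<in> carrier G"
    using a b by (auto simp: B_def c_def C_def)
  have split: "commutator a (B \<otimes> b) \<otimes> inv (C \<otimes> c)
      = (commutator a B \<otimes> inv C) \<otimes> (C \<otimes> commutator B c \<otimes> inv C)"
    using a b carrier by (simp add: c_def commutator_def m_assoc inv_mult_group)
  have "commutator B c \<in> lower_central G (Suc k)"
    using commutator_mem_lower_central_Suc[OF carrier(1)] ab by (simp add: c_def)
  then have "C \<otimes> commutator B c \<otimes> inv C \<in> lower_central G (Suc k)"
    using lower_central_conj_closed carrier(3) by blast
  moreover have "commutator a B \<otimes> inv C \<in> lower_central G (Suc k)"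
    using Suc by (simp add: B_def C_def c_def)
  ultimately have "commutator a (B \<otimes> b) \<otimes> inv (C \<otimes> c) \<in> lower_central G (Suc k)"
    unfolding split using subgroup.m_closed[OF subgroup_lower_central] by blast
  then show ?case by (simp add: B_def C_def c_def)
qed

lemma commutator_pow_ord_mem_lower_central_Suc:
  assumes a: "a \<in> carrier G" and b: "b \<in> carrier G"
    and ab: "commutator a b \<in> lower_central G k"
  shows "commutator a b [^] ord b \<in> lower_central G (Suc k)"
proof -
  have "inv (commutator a b [^] ord b) \<in> lower_central G (Suc k)"
    using commutator_pow_right_mod_lower_central[OF a b ab, of "ord b"] a b
    by (simp add: commutator_def)
  then show ?thesis
    using subgroup.m_inv_closed[OF subgroup_lower_central] a b by fastforce
qed

lemma commutator_coprime_ord_mem_lower_central: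
  assumes "a \<in> carrier G" "b \<in> carrier G" "coprime (ord a) (ord b)"
  shows "commutator a b \<in> lower_central G k"
  using assms
proof (induction k arbitrary: a b)
  case (Suc k)
  note a = Suc.prems(1) and b = Suc.prems(2)
  have pow_b: "commutator a b [^] ord b \<in> lower_central G (Suc k)"
    using commutator_pow_ord_mem_lower_central_Suc[OF a b] Suc by blast
  have "commutator b a [^] ord a \<in> lower_central G (Suc k)"
    using commutator_pow_ord_mem_lower_central_Suc[OF b a] Suc by (simp add: coprime_commute)
  then have pow_a: "commutator a b [^] ord a \<in> lower_central G (Suc k)"
    using subgroup.m_inv_closed[OF subgroup_lower_central] a b
    by (metis commutator_swap commutator_closed nat_pow_inv inv_inv nat_pow_closed)
  show ?case
    using mem_subgroup_of_coprime_pows[OF subgroup_lower_central _ pow_b pow_a] a b Suc.prems(3)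
    by (simp add: coprime_commute)
qed simp

lemma nilpotent_coprime_ord_commute:
  assumes "nilpotent_group G" and a: "a \<in> carrier G" and b: "b \<in> carrier G"
    and "coprime (ord a) (ord b)"
  shows "a \<otimes> b = b \<otimes> a"
proof -
  obtain n where "lower_central G n = {\<one>}"
    using assms(1) unfolding nilpotent_group_def by blast
  then have trivial: "commutator a b = \<one>"
    using commutator_coprime_ord_mem_lower_central[OF a b assms(4), of n] by simp
  have "a \<otimes> b = commutator a b \<otimes> (b \<otimes> a)"
    using a b by (simp add: commutator_def m_assoc)
  also have "\<dots> = b \<otimes> a"
    using a b by (simp add: trivial)
  finally show ?thesis .
qed

lemma cyclic_group_subgroup_generated_pair:
  assumes "x \<in> carrier G" "y \<in> carrier G" "g \<in> carrier G"
    and "generate G {x, y} = generate G {g}"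
  shows "cyclic_group (subgroup_generated G {x, y})"
proof -
  have "subgroup_generated G {x, y} = subgroup_generated G {g}"
    using assms unfolding subgroup_generated_def by (simp add: Int_absorb1)
  then show ?thesis using cyclic_group_generated by simp
qed

lemma cyclic_group_subgroup_generated_pow:
  assumes x: "x \<in> carrier G"
  shows "cyclic_group (subgroup_generated G {x, x [^] (k::nat)})"
proof -
  have S: "subgroup (generate G {x}) G" using x by (simp add: generate_is_subgroup)
  have "x \<in> generate G {x}" by (simp add: generate.incl)
  then have "generate G {x, x [^] k} \<subseteq> generate G {x}"
    using nat_pow_mem_subgroup[OF S] generate_subgroup_incl[OF _ S] by simp
  moreover have "generate G {x} \<subseteq> generate G {x, x [^] k}" by (rule mono_generate) blast
  ultimately show ?thesis using cyclic_group_subgroup_generated_pair[OF x _ x] x by blast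
qed

lemma cyclic_group_subgroup_generated_commuting_coprime:
  assumes a: "a \<in> carrier G" and b: "b \<in> carrier G" and ab: "a \<otimes> b = b \<otimes> a"
    and cop: "coprime (ord a) (ord b)"
  shows "cyclic_group (subgroup_generated G {a, b})"
proof -
  define g where "g = a \<otimes> b"
  have S: "subgroup (generate G {g}) G" using a b by (simp add: g_def generate_is_subgroup)
  have g: "g \<in> generate G {g}" by (simp add: generate.incl)
  have "a [^] ord b = g [^] ord b"
    using pow_mult_distrib[OF ab a b] a b by (simp add: g_def)
  then have "a [^] ord b \<in> generate G {g}" using nat_pow_mem_subgroup[OF S g] by simp
  moreover have "a [^] ord a \<in> generate G {g}" using a subgroup.one_closed[OF S] by simp
  ultimately have a_in: "a \<in> generate G {g}"
    using mem_subgroup_of_coprime_pows[OF S a] cop by blast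
  have "b = inv a \<otimes> g" using a b by (simp add: g_def)
  then have "b \<in> generate G {g}" using a_in g S by (metis subgroup.m_closed subgroup.m_inv_closed)
  then have "generate G {a, b} \<subseteq> generate G {g}"
    using a_in generate_subgroup_incl[OF _ S] by simp
  moreover have "g \<in> generate G {a, b}"
    unfolding g_def by (rule generate.eng) (auto intro: generate.incl)
  then have "generate G {g} \<subseteq> generate G {a, b}"
    using a b generate_subgroup_incl[OF _ generate_is_subgroup] by simp
  ultimately show ?thesis
    using cyclic_group_subgroup_generated_pair[OF a b m_closed[OF a b]] by (simp add: g_def)
qed

lemma ord_dvd_card_subgroup:
  assumes H: "subgroup H G" and y: "y \<in> H"
  shows "ord y dvd card H"
proof -
  have "y [^] card H = y [^]\<^bsub>G\<lparr>carrier := H\<rparr>\<^esub> order (G\<lparr>carrier := H\<rparr>)"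
    by (simp add: order_def nat_pow_consistent)
  also have "\<dots> = \<one>"
    using group.pow_order_eq_1[OF subgroup_imp_group[OF H]] y by simp
  finally show ?thesis
    using pow_eq_id subgroup.mem_carrier[OF H y] by blast
qed

lemma ord_pow_ord_div_prime:
  assumes x: "x \<in> carrier G" and p: "Factorial_Ring.prime p" "p dvd ord x" and ord: "ord x \<noteq> 0"
  shows "ord (x [^] (ord x div p)) = p"
proof -
  obtain k where k: "ord x = p * k" using p(2) by blast
  then have "k \<noteq> 0" using ord by simp
  then show ?thesis
    using ord_pow[OF x, of k] k p(1) by (simp add: prime_gt_0_nat)
qed

theorem Cauchy_theorem:
  assumes fin: "finite (carrier G)" and p: "Factorial_Ring.prime p" "p dvd order G"
  shows "\<exists>x\<in>carrier G. ord x = p"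
proof -
  have "order G \<noteq> 0" using fin by (simp add: order_gt_0_iff_finite[symmetric])
  then obtain m where m: "order G = p ^ multiplicity p (order G) * m"
    using multiplicity_decompose'[of "order G" p] p(1) not_prime_unit by blast
  obtain H where H: "subgroup H G" "card H = p ^ multiplicity p (order G)"
    using sylow_thm[OF p(1) is_group m fin] by blast
  have "multiplicity p (order G) \<noteq> 0"
    using p \<open>order G \<noteq> 0\<close> by (simp add: prime_multiplicity_gt_zero_iff)
  then have "p \<le> card H"
    using H(2) self_le_power[OF prime_ge_1_nat[OF p(1)]] by simp
  then have "\<not> H \<subseteq> {\<one>}"
    using card_mono[of "{\<one>}" H] prime_ge_2_nat[OF p(1)] by auto
  then obtain y where y: "y \<in> H" "y \<noteq> \<one>" by blast
  have y_carrier: "y \<in> carrier G" using subgroup.mem_carrier[OF H(1) y(1)] .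
  then obtain q where q: "Factorial_Ring.prime q" "q dvd ord y"
    using prime_factor_nat ord_eq_1 y(2) by blast
  have "q dvd p ^ multiplicity p (order G)"
    using dvd_trans[OF q(2) ord_dvd_card_subgroup[OF H(1) y(1)]] H(2) by simp
  then have "q = p" using prime_dvd_power primes_dvd_imp_eq q(1) p(1) by blast
  then show ?thesis
    using ord_pow_ord_div_prime[OF y_carrier p(1)] q(2) ord_ge_1[OF fin y_carrier] y_carrier by auto
qed

end

lemma cyc_walk_iff:
  "cyc_walk G xs \<longleftrightarrow> xs \<noteq> [] \<and> set xs \<subseteq> cyc_vertices G \<and> successively (cyc_adj G) xs"
  by (simp add: cyc_walk_def successively_conv_nth)

lemma cyc_adj_commute: "cyc_adj G x y \<longleftrightarrow> cyc_adj G y x"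
  by (auto simp: cyc_adj_def insert_commute)

lemma cyc_walk_rev: "cyc_walk G xs \<Longrightarrow> cyc_walk G (rev xs)"
  by (simp add: cyc_walk_iff cyc_adj_commute)

lemma cyc_walk_append:
  "cyc_walk G xs \<Longrightarrow> cyc_walk G ys \<Longrightarrow> last xs = hd ys \<Longrightarrow> cyc_walk G (xs @ tl ys)"
  by (cases ys) (auto simp: cyc_walk_iff successively_append_iff successively_Cons)

lemma cyc_dist_le_walk:
  "cyc_walk G xs \<Longrightarrow> cyc_dist G (hd xs) (last xs) \<le> enat (length xs - 1)"
  unfolding cyc_dist_def by (rule Inf_lower) auto

lemma cyc_dist_finiteE:
  assumes "cyc_dist G x y \<noteq> \<infinity>"
  obtains xs where "cyc_walk G xs" "hd xs = x" "last xs = y"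
    "cyc_dist G x y = enat (length xs - 1)"
proof -
  let ?D = "{enat (length xs - 1) | xs. cyc_walk G xs \<and> hd xs = x \<and> last xs = y}"
  have "?D \<noteq> {}"
  proof
    assume "?D = {}"
    then have "cyc_dist G x y = Inf {}" by (simp only: cyc_dist_def)
    with assms show False by (simp add: top_enat_def)
  qed
  then obtain d where "d \<in> ?D" by blast
  then have "Inf ?D \<in> ?D" by (rule wellorder_InfI)
  then show ?thesis using that unfolding cyc_dist_def by blast
qed

lemma cyc_dist_triangle: "cyc_dist G x z \<le> cyc_dist G x y + cyc_dist G y z"
proof (cases "cyc_dist G x y = \<infinity> \<or> cyc_dist G y z = \<infinity>")
  case False
  then have "cyc_dist G x y \<noteq> \<infinity>" "cyc_dist G y z \<noteq> \<infinity>" by simp_all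
  obtain xs where
    xs: "cyc_walk G xs" "hd xs = x" "last xs = y" "cyc_dist G x y = enat (length xs - 1)"
    using cyc_dist_finiteE[OF \<open>cyc_dist G x y \<noteq> \<infinity>\<close>] .
  obtain ys where
    ys: "cyc_walk G ys" "hd ys = y" "last ys = z" "cyc_dist G y z = enat (length ys - 1)"
    using cyc_dist_finiteE[OF \<open>cyc_dist G y z \<noteq> \<infinity>\<close>] .
  have ne: "xs \<noteq> []" "ys \<noteq> []" using xs(1) ys(1) by (simp_all add: cyc_walk_def)
  have "hd (xs @ tl ys) = x" using xs(2) ne(1) by simp
  moreover have "last (xs @ tl ys) = z" using xs(3) ys(2,3) ne(2) by (cases ys) auto
  ultimately have "cyc_dist G x z \<le> enat (length (xs @ tl ys) - 1)"
    using cyc_dist_le_walk[OF cyc_walk_append[OF xs(1) ys(1)]] xs(3) ys(2) by simp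
  also have "\<dots> = cyc_dist G x y + cyc_dist G y z"
    using xs(4) ys(4) ne by (simp add: Suc_leI)
  finally show ?thesis .
qed auto

lemma cyc_dist_commute: "cyc_dist G x y = cyc_dist G y x"
proof -
  have "cyc_dist G v u \<le> cyc_dist G u v" for u v
  proof (cases "cyc_dist G u v = \<infinity>")
    case False
    then obtain xs where xs: "cyc_walk G xs" "hd xs = u" "last xs = v"
      "cyc_dist G u v = enat (length xs - 1)"
      by (rule cyc_dist_finiteE)
    then have "xs \<noteq> []" by (simp add: cyc_walk_def)
    then show ?thesis
      using cyc_dist_le_walk[OF cyc_walk_rev[OF xs(1)]] xs(2-4) by (simp add: hd_rev last_rev)
  qed simp
  then show ?thesis by (metis antisym)
qed

lemma cyc_dist_le_1:
  assumes "x \<in> cyc_vertices G" "y \<in> cyc_vertices G"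
    and "cyclic_group (subgroup_generated G {x, y})"
  shows "cyc_dist G x y \<le> 1"
proof (cases "x = y")
  case True
  then have "cyc_walk G [x]" using assms by (simp add: cyc_walk_def)
  then show ?thesis using cyc_dist_le_walk[of G "[x]"] True by (simp add: zero_enat_def[symmetric])
next
  case False
  then have "cyc_walk G [x, y]" using assms by (simp add: cyc_walk_def cyc_adj_def)
  then show ?thesis using cyc_dist_le_walk[of G "[x, y]"] by (simp add: one_enat_def)
qed

context group
begin

lemma cyc_vertices_iff: "x \<in> cyc_vertices G \<longleftrightarrow> x \<in> carrier G \<and> x \<noteq> \<one>"
  by (simp add: cyc_vertices_def)

lemma cyc_dist_prime_ord_le_1:
  assumes fin: "finite (carrier G)" and x: "x \<in> cyc_vertices G"
    and p: "Factorial_Ring.prime p" "p dvd ord x"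
  obtains y where "y \<in> cyc_vertices G" "ord y = p" "cyc_dist G x y \<le> 1"
proof
  have x': "x \<in> carrier G" using x by (simp add: cyc_vertices_iff)
  let ?y = "x [^] (ord x div p)"
  show ord: "ord ?y = p"
    using ord_pow_ord_div_prime[OF x' p] ord_ge_1[OF fin x'] by simp
  then show y: "?y \<in> cyc_vertices G"
    using x' p(1) by (auto simp: cyc_vertices_iff)
  show "cyc_dist G x ?y \<le> 1"
    using cyc_dist_le_1[OF x y] cyclic_group_subgroup_generated_pow[OF x'] by blast
qed

lemma cyc_dist_coprime_ord_le_1:
  assumes "nilpotent_group G" and a: "a \<in> cyc_vertices G" and b: "b \<in> cyc_vertices G"
    and cop: "coprime (ord a) (ord b)"
  shows "cyc_dist G a b \<le> 1"
proof -
  have "a \<in> carrier G" "b \<in> carrier G" using a b by (auto simp: cyc_vertices_iff)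
  then show ?thesis
    using cyc_dist_le_1[OF a b] cyclic_group_subgroup_generated_commuting_coprime
      nilpotent_coprime_ord_commute[OF assms(1)] cop by blast
qed

lemma nilpotent_cyc_dist_le_3:
  assumes fin: "finite (carrier G)" and nil: "nilpotent_group G"
    and pq: "Factorial_Ring.prime p" "Factorial_Ring.prime q" "p \<noteq> q" "p dvd order G" "q dvd order G"
    and x: "x \<in> cyc_vertices G" and z: "z \<in> cyc_vertices G"
  shows "cyc_dist G x z \<le> 3"
proof (cases "\<exists>r s. Factorial_Ring.prime r \<and> r dvd ord x \<and>
    Factorial_Ring.prime s \<and> s dvd ord z \<and> r \<noteq> s")
  case True
  then obtain r s where r: "Factorial_Ring.prime r" "r dvd ord x"
    and s: "Factorial_Ring.prime s" "s dvd ord z" and "r \<noteq> s"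
    by blast
  obtain x' where x': "x' \<in> cyc_vertices G" "ord x' = r" "cyc_dist G x x' \<le> 1"
    using cyc_dist_prime_ord_le_1[OF fin x r] .
  obtain z' where z': "z' \<in> cyc_vertices G" "ord z' = s" "cyc_dist G z z' \<le> 1"
    using cyc_dist_prime_ord_le_1[OF fin z s] .
  have "cyc_dist G x' z' \<le> 1"
    using cyc_dist_coprime_ord_le_1[OF nil x'(1) z'(1)] primes_coprime[OF r(1) s(1) \<open>r \<noteq> s\<close>]
      x'(2) z'(2) by simp
  have "cyc_dist G x z \<le> cyc_dist G x x' + (cyc_dist G x' z' + cyc_dist G z' z)"
    using cyc_dist_triangle[where y = x'] cyc_dist_triangle[where y = z']
    by (meson add_left_mono order_trans)
  also have "\<dots> \<le> 1 + (1 + 1)"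
    using x'(3) z'(3) \<open>cyc_dist G x' z' \<le> 1\<close> cyc_dist_commute[of G z' z]
    by (intro add_mono) simp_all
  finally show ?thesis by simp
next
  case False
  have "ord x \<noteq> 1" "ord z \<noteq> 1" using x z ord_eq_1 by (auto simp: cyc_vertices_iff)
  then obtain r t where r: "Factorial_Ring.prime r" "r dvd ord x"
    and t: "Factorial_Ring.prime t" "t dvd ord z"
    using prime_factor_nat by blast
  have "t = r" using False r t by blast
  obtain s where s: "Factorial_Ring.prime s" "s dvd order G" "s \<noteq> r"
    using pq by (cases "p = r") auto
  have "\<not> s dvd ord x" using False s t \<open>t = r\<close> by blast
  moreover have "\<not> s dvd ord z" using False r s by blast
  ultimately have "coprime s (ord x)" "coprime s (ord z)"
    using prime_imp_coprime[OF s(1)] by blast+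
  obtain y where y: "y \<in> carrier G" "ord y = s" using Cauchy_theorem[OF fin s(1,2)] by blast
  then have "y \<in> cyc_vertices G" using s(1) by (auto simp: cyc_vertices_iff)
  then have "cyc_dist G y x \<le> 1" "cyc_dist G y z \<le> 1"
    using cyc_dist_coprime_ord_le_1[OF nil] x z y(2)
      \<open>coprime s (ord x)\<close> \<open>coprime s (ord z)\<close>
    by blast+
  then have "cyc_dist G x z \<le> 1 + 1"
    using cyc_dist_triangle[where y = y] cyc_dist_commute[of G x y] add_mono order_trans by metis
  then show ?thesis by (simp add: one_add_one order_trans)
qed

end

theorem lemma2p4:
  fixes G :: "('a, 'b) monoid_scheme"
  assumes "group G" and "finite (carrier G)" and "nilpotent_group G"
    and "\<exists>p q :: nat. Factorial_Ring.prime p \<and> Factorial_Ring.prime q \<and> p \<noteq> q \<and> p dvd order G \<and> q dvd order G"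
  shows "cyc_connected G \<and> cyc_diam G \<le> 3"
proof -
  interpret group G by fact
  obtain p q :: nat where pq: "Factorial_Ring.prime p" "Factorial_Ring.prime q" "p \<noteq> q"
    "p dvd order G" "q dvd order G"
    using assms(4) by blast
  have dist: "cyc_dist G x z \<le> 3" if "x \<in> cyc_vertices G" "z \<in> cyc_vertices G" for x z
    using nilpotent_cyc_dist_le_3[OF assms(2,3) pq that] .
  have "cyc_connected G"
    unfolding cyc_connected_def
  proof (intro ballI)
    fix x z assume "x \<in> cyc_vertices G" "z \<in> cyc_vertices G"
    then have "cyc_dist G x z \<noteq> \<infinity>" using dist by (metis enat_ord_simps(5) numeral_ne_infinity)
    then show "\<exists>xs. cyc_walk G xs \<and> hd xs = x \<and> last xs = z"
      by (metis cyc_dist_finiteE)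
  qed
  moreover have "cyc_diam G \<le> 3"
    unfolding cyc_diam_def using dist by (auto intro!: Sup_least)
  ultimately show ?thesis ..
qed

end
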